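(* Let $(G,L,v)$ be a reachable triple with $\deg_G(v)=2$, and let $i\in[4]$ be a color. Then one of the following holds: (1) the vertex $v$ and its two neighbors form a triangle in $G$; (2) $P(G,L,v,i,D)\le\frac{13}{27}$ for all integers $D\ge2$.
   Context: Colors are $[4]=\{1,2,3,4\}$. A list-coloring instance $(G,L)$ is a finite simple graph $G=(V,E)$ with $L:V\to 2^{[4]}$. For a vertex $v$, $G_v$ is $G$ with $v$ and its incident edges removed, and $G_{v,w}=(G_v)_w$. If $v$ has neighbors $v_1,\dots,v_d$ (in a fixed order), then for $k\in[d]$ and a color $j$, $L_{k,j}$ is the list assignment on $G_v$ with $L_{k,j}(v_\ell)=L(v_\ell)\setminus\{j\}$ for $\ell<k$ and $L_{k,j}(u)=L(u)$ for all other vertices $u$ (so $L_{1,j}=L$). A triple $(G,L,v)$ with $v\in V$ is reachable if $\deg_G(u)\le3$ and $|L(u)|\ge\deg_G(u)+1$ for every $u\in V$, and moreover $\deg_G(v)\le2$ and $|L(v)|\ge\deg_G(v)+2$. The procedure $P(G,L,v,i,D)$ ($i\in[4]$, $D$ an integer) is defined recursively (empty products equal $1$): (a) If $i\notin L(v)$, return $0$. Otherwise, if $D\le 0$ or $\deg_G(v)=0$, return $1/|L(v)|$. (b) If $\deg_G(v)=1$ with neighbor $v_1$: let $x=P(G_v,L,v_1,i,D-1)$. If $|L(v)|=2$, say $L(v)=\{i,j\}$, let $y=P(G_v,L,v_1,j,D-1)$ and return $\frac{1-x}{2-x-y}$. If $|L(v)|=4$, return $\frac{1-x}{3}$. If $|L(v)|=3$,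 let $j$ be the unique color in $[4]\setminus L(v)$, $y=P(G_v,L,v_1,j,D-1)$, and return $\frac{1-x}{2+y}$. (c) If $\deg_G(v)=2$: order its neighbors $v_1,v_2$ so that $\deg_G(v_1)\ge\deg_G(v_2)$ and, if $\deg_G(v_1)=\deg_G(v_2)=1$, so that $i\notin L(v_1)$ implies $i\notin L(v_2)$. Let $u_1,\dots,u_{d_1}$ be the neighbors of $v_1$ in $G_v$ (fixed order) and for $k\in[d_1]$, $w\in[4]$ let $L'_{k,w}$ be the list assignment on $G_{v,v_1}$ with $L'_{k,w}(u_\ell)=L(u_\ell)\setminus\{w\}$ for $\ell<k$ and $L'_{k,w}(u)=L(u)$ otherwise. Set $x_{k,w}=P(G_{v,v_1},L'_{k,w},u_k,w,D-1)$ for $k\in[d_1]$, $w\in L(v_1)$. For $j\in L(v)$ set $f_j=0$ if $j\notin L(v_1)$ and otherwise $f_j=\frac{\prod_{k=1}^{d_1}(1-x_{k,j})}{\sum_{w\in L(v_1)}\prod_{k=1}^{d_1}(1-x_{k,w})}$, and set $y_j=P(G_v,L_{2,j},v_2,j,D-1)$. Return $\frac{(1-f_i)(1-y_i)}{\sum_{j\in L(v)}(1-f_j)(1-y_j)}$. (d) If $\deg_G(v)=3$ with neighbors $v_1,v_2,v_3$: for $j\in L(v)$ let $x_j=P(G_v,L_{1,j},v_1,j,D-1)$, $y_j=P(G_v,L_{2,j},v_2,j,D-1)$, $z_j=P(G_v,L_{3,j},v_3,j,D-1)$, and return $\frac{(1-x_i)(1-y_i)(1-z_i)}{\sum_{j\in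 L(v)}(1-x_j)(1-y_j)(1-z_j)}$. For reachable triples, all recursive calls are again on reachable triples and case (d) never occurs. *)

theory Defs
  imports Complex_Main
begin

definition colors :: "nat set" where
  "colors = {1..4}"

definition wf_graph :: "'a set \<Rightarrow> 'a set set \<Rightarrow> bool" where
  "wf_graph V E \<longleftrightarrow> finite V \<and> (\<forall>e\<in>E. e \<subseteq> V \<and> card e = 2)"

definition nbrs :: "'a set set \<Rightarrow> 'a \<Rightarrow> 'a set" where
  "nbrs E v = {u. {u, v} \<in> E \<and> u \<noteq> v}"

definition deg :: "'a set set \<Rightarrow> 'a \<Rightarrow> nat" where
  "deg E v = card (nbrs E v)"

definition delv :: "'a set set \<Rightarrow> 'a \<Rightarrow> 'a set set" where
  "delv E v = {e \<in> E. v \<notin> e}"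

definition reachable :: "'a set \<Rightarrow> 'a set set \<Rightarrow> ('a \<Rightarrow> nat set) \<Rightarrow> 'a \<Rightarrow> bool" where
  "reachable V E L v \<longleftrightarrow> wf_graph V E \<and> v \<in> V \<and>
     (\<forall>u\<in>V. L u \<subseteq> colors \<and> deg E u \<le> 3 \<and> card (L u) \<ge> deg E u + 1) \<and>
     deg E v \<le> 2 \<and> card (L v) \<ge> deg E v + 2"

text \<open>The "fixed order" of neighbours: an arbitrary choice function listing the
  neighbours of a vertex in a graph (given by its edge set) without repetition.\<close>
definition valid_order :: "('a set set \<Rightarrow> 'a \<Rightarrow> 'a list) \<Rightarrow> bool" where
  "valid_order ord \<longleftrightarrow>
     (\<forall>E v. finite (nbrs E v) \<longrightarrow> distinct (ord E v) \<and> set (ord E v) = nbrs E v)"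

text \<open>L_{k,j} relative to a neighbour list ns (0-indexed k: the first k neighbours lose j).\<close>
definition Lmod :: "('a \<Rightarrow> nat set) \<Rightarrow> 'a list \<Rightarrow> nat \<Rightarrow> nat \<Rightarrow> 'a \<Rightarrow> nat set" where
  "Lmod L ns k j = (\<lambda>u. if u \<in> set (take k ns) then L u - {j} else L u)"

text \<open>Ordering rule of case (c): the pair (a,b) is admissible as (v1,v2).\<close>
definition ok_pair :: "'a set set \<Rightarrow> ('a \<Rightarrow> nat set) \<Rightarrow> nat \<Rightarrow> 'a \<Rightarrow> 'a \<Rightarrow> bool" where
  "ok_pair E L i a b \<longleftrightarrow> deg E a \<ge> deg E b \<and>
     (deg E a = 1 \<and> deg E b = 1 \<longrightarrow> (i \<notin> L a \<longrightarrow> i \<notin> L b))"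

text \<open>The procedure with fuel n = nat D (D \<le> 0 corresponds to fuel 0).
  Unreachable configurations return 0.\<close>
primrec Pn :: "nat \<Rightarrow> ('a set set \<Rightarrow> 'a \<Rightarrow> 'a list) \<Rightarrow> 'a set set \<Rightarrow> ('a \<Rightarrow> nat set)
                \<Rightarrow> 'a \<Rightarrow> nat \<Rightarrow> real" where
  "Pn 0 ord E L v i = (if i \<notin> L v then 0 else 1 / real (card (L v)))"
| "Pn (Suc n) ord E L v i =
   (if i \<notin> L v then 0
    else if deg E v = 0 then 1 / real (card (L v))
    else if deg E v = 1 then
      (let v1 = hd (ord E v); E' = delv E v; x = Pn n ord E' L v1 i in
       if card (L v) = 2 then
         (let j = the_elem (L v - {i}); y = Pn n ord E' L v1 j in (1 - x) / (2 - x - y))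
       else if card (L v) = 4 then (1 - x) / 3
       else if card (L v) = 3 then
         (let j = the_elem (colors - L v); y = Pn n ord E' L v1 j in (1 - x) / (2 + y))
       else 0)
    else if deg E v = 2 then
      (let a = ord E v ! 0; b = ord E v ! 1;
           v1 = (if ok_pair E L i a b then a else b);
           v2 = (if ok_pair E L i a b then b else a);
           E' = delv E v; E'' = delv E' v1;
           us = ord E' v1; d1 = length us;
           x = (\<lambda>k w. Pn n ord E'' (Lmod L us k w) (us ! k) w);
           pr = (\<lambda>w. \<Prod>k<d1. (1 - x k w));
           f = (\<lambda>j. if j \<notin> L v1 then 0 else pr j / (\<Sum>w\<in>L v1. pr w));
           y = (\<lambda>j. Pn n ord E' (Lmod L [v1, v2] 1 j) v2 j)
       in (1 - f i) * (1 - y i) / (\<Sum>j\<in>L v. (1 - f j) * (1 - y j)))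
    else if deg E v = 3 then
      (let ns = ord E v; E' = delv E v;
           z = (\<lambda>k j. Pn n ord E' (Lmod L ns k j) (ns ! k) j);
           g = (\<lambda>j. (1 - z 0 j) * (1 - z 1 j) * (1 - z 2 j))
       in g i / (\<Sum>j\<in>L v. g j))
    else 0)"

definition P :: "('a set set \<Rightarrow> 'a \<Rightarrow> 'a list) \<Rightarrow> 'a set set \<Rightarrow> ('a \<Rightarrow> nat set)
                \<Rightarrow> 'a \<Rightarrow> nat \<Rightarrow> int \<Rightarrow> real" where
  "P ord E L v i D = Pn (nat D) ord E L v i"

text \<open>v together with its neighbours forms a triangle (v has degree 2 here).\<close>
definition triangle_at :: "'a set set \<Rightarrow> 'a \<Rightarrow> bool" where
  "triangle_at E v \<longleftrightarrow> (\<forall>a\<in>nbrs E v. \<forall>b\<in>nbrs E v. a \<noteq> b \<longrightarrow> {a, b} \<in> E)"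

end

theory Submission
  imports Defs
begin

text \<open>Every recursive call is again on a reachable triple, and by induction on the depth every
  value lies in \<open>[0, 1/2]\<close>, with lower bounds \<open>1/6\<close> at vertices of degree at most 1 and \<open>1/15\<close>
  at vertices of degree 2.  In case (c) the value is \<open>g\<^sub>i / \<Sum>\<^sub>j g\<^sub>j\<close> with
  \<open>g\<^sub>j = (1 - f\<^sub>j)(1 - y\<^sub>j)\<close>, where \<open>f\<close> is a probability vector with entries at most \<open>4/7\<close> and
  \<open>y\<^sub>j \<le> 1/2\<close>; this is at most \<open>13/27\<close> as soon as \<open>f\<^sub>i \<ge> 1/16\<close> or the \<open>y\<^sub>j\<close>, \<open>j \<noteq> i\<close>, are small
  in one of three ways.  Without a triangle \<open>v\<^sub>1\<close> is not adjacent to \<open>v\<^sub>2\<close>.  If \<open>v\<^sub>2\<close> keeps no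
  neighbour in \<open>G\<^sub>v\<close>, \<open>y\<^sub>j\<close> is uniform on \<open>L(v\<^sub>2)\<close>; if it keeps one neighbour \<open>w \<noteq> v\<^sub>1\<close>, the lists
  of \<open>v\<^sub>2\<close> and \<open>w\<close> do not depend on \<open>j\<close> and the lower bound at \<open>w\<close> makes the \<open>y\<^sub>j\<close> small; if it
  keeps two, then \<open>v\<^sub>1\<close> has degree 3 as well, \<open>L(v\<^sub>1)\<close> contains all colours and \<open>f\<^sub>i \<ge> 1/16\<close>.\<close>

lemma nbrs_commute: "y \<in> nbrs E z \<longleftrightarrow> z \<in> nbrs E y"
  by (auto simp: nbrs_def insert_commute)

lemma nbrs_delv: "z \<noteq> u \<Longrightarrow> nbrs (delv E u) z = nbrs E z - {u}"
  by (auto simp: nbrs_def delv_def)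

lemma nbrs_delv_subset: "nbrs (delv E u) z \<subseteq> nbrs E z"
  by (auto simp: nbrs_def delv_def)

lemma deg_delv_le: "finite (nbrs E z) \<Longrightarrow> deg (delv E u) z \<le> deg E z"
  unfolding deg_def by (rule card_mono[OF _ nbrs_delv_subset])

lemma deg_delv_nbr:
  assumes "finite (nbrs E z)" "u \<in> nbrs E z"
  shows "deg (delv E u) z = deg E z - 1" "1 \<le> deg E z"
proof -
  have "z \<noteq> u" using assms(2) by (auto simp: nbrs_def)
  then show "deg (delv E u) z = deg E z - 1"
    unfolding deg_def using assms by (simp add: nbrs_delv)
  show "1 \<le> deg E z"
    unfolding deg_def using assms by (metis One_nat_def Suc_leI card_gt_0_iff empty_iff)
qed

lemma finite_colors: "finite colors" and card_colors: "card colors = 4"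
  by (auto simp: colors_def)

lemma card_le_4: "A \<subseteq> colors \<Longrightarrow> card A \<le> 4"
  by (metis card_mono finite_colors card_colors)

lemma eq_colors_if_card: "A \<subseteq> colors \<Longrightarrow> 4 \<le> card A \<Longrightarrow> A = colors"
  by (metis card_colors card_seteq finite_colors)

lemma card_colors_remove: "i \<in> colors \<Longrightarrow> card (colors - {i}) = 3"
  by (simp add: card_colors finite_colors)

text \<open>Reachability without the vertex set: vertices outside it are isolated, so the list
  conditions are only required at non-isolated vertices.\<close>

definition admissible :: "'a set set \<Rightarrow> ('a \<Rightarrow> nat set) \<Rightarrow> bool" where
  "admissible E L \<longleftrightarrow> (\<forall>z. finite (nbrs E z) \<and> deg E z \<le> 3 \<and>
      (nbrs E z \<noteq> {} \<longrightarrow> L z \<subseteq> colors \<and> deg E z + 1 \<le> card (L z)))"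

definition reachable_at :: "'a set set \<Rightarrow> ('a \<Rightarrow> nat set) \<Rightarrow> 'a \<Rightarrow> bool" where
  "reachable_at E L u \<longleftrightarrow> admissible E L \<and> deg E u \<le> 2 \<and> L u \<subseteq> colors \<and> deg E u + 2 \<le> card (L u)"

lemma admissibleD:
  assumes "admissible E L"
  shows "finite (nbrs E z)" "deg E z \<le> 3"
    and "u \<in> nbrs E z \<Longrightarrow> L z \<subseteq> colors" "u \<in> nbrs E z \<Longrightarrow> deg E z + 1 \<le> card (L z)"
  using assms unfolding admissible_def by blast+

lemma reachable_atD:
  assumes "reachable_at E L u"
  shows "admissible E L" "deg E u \<le> 2" "L u \<subseteq> colors" "deg E u + 2 \<le> card (L u)"
    "2 \<le> card (L u)" "card (L u) \<le> 4"
  using assms card_le_4 unfolding reachable_at_def by auto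

lemma admissible_delv:
  assumes adm: "admissible E L"
    and L': "\<forall>z. L' z = L z \<or> (u \<in> nbrs E z \<and> (\<exists>c. L' z = L z - {c}))"
  shows "admissible (delv E u) L'"
  unfolding admissible_def
proof (intro allI conjI)
  fix z
  have fin: "finite (nbrs E z)" using admissibleD(1)[OF adm] .
  show "finite (nbrs (delv E u) z)" using fin nbrs_delv_subset finite_subset by metis
  show "deg (delv E u) z \<le> 3" using deg_delv_le[OF fin, of u] admissibleD(2)[OF adm, of z] by linarith
  show "nbrs (delv E u) z \<noteq> {} \<longrightarrow> L' z \<subseteq> colors \<and> deg (delv E u) z + 1 \<le> card (L' z)"
  proof
    assume "nbrs (delv E u) z \<noteq> {}"
    then obtain y where "y \<in> nbrs E z" using nbrs_delv_subset[of E u z] by blast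
    then have Lz: "L z \<subseteq> colors" "deg E z + 1 \<le> card (L z)" using admissibleD[OF adm] by blast+
    have "finite (L z)" using Lz(1) finite_colors finite_subset by blast
    from L' consider "L' z = L z" | c where "u \<in> nbrs E z" "L' z = L z - {c}" by blast
    then show "L' z \<subseteq> colors \<and> deg (delv E u) z + 1 \<le> card (L' z)"
    proof cases
      case 1
      then show ?thesis using Lz deg_delv_le[OF fin, of u] by simp
    next
      case 2
      have "card (L z) - 1 \<le> card (L z - {c})" by (simp add: card_Diff_singleton_if \<open>finite (L z)\<close>)
      then show ?thesis using Lz 2 deg_delv_nbr[OF fin 2(1)] by auto
    qed
  qed
qed

lemma reachable_at_delv:
  assumes adm: "admissible E L" and u: "u \<in> nbrs E z"
    and L': "\<forall>z. L' z = L z \<or> (u \<in> nbrs E z \<and> (\<exists>c. L' z = L z - {c}))"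
    and same: "L' z = L z"
  shows "reachable_at (delv E u) L' z"
proof -
  have fin: "finite (nbrs E z)" using admissibleD(1)[OF adm] .
  have "deg (delv E u) z = deg E z - 1" "1 \<le> deg E z" using deg_delv_nbr[OF fin u] by auto
  moreover have "deg E z \<le> 3" "L z \<subseteq> colors" "deg E z + 1 \<le> card (L z)"
    using admissibleD(2)[OF adm] admissibleD(3,4)[OF adm u] by auto
  ultimately show ?thesis
    unfolding reachable_at_def using admissible_delv[OF adm L'] same by auto
qed

lemma Lmod_0 [simp]: "Lmod L ns 0 j = L"
  by (simp add: Lmod_def)

lemma Lmod_nth:
  assumes "distinct ns" "k < length ns"
  shows "Lmod L ns k j (ns ! k) = L (ns ! k)"
proof -
  have "distinct (take k ns @ ns ! k # drop (Suc k) ns)"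
    using assms by (simp flip: id_take_nth_drop)
  then have "ns ! k \<notin> set (take k ns)" by simp
  then show ?thesis by (simp add: Lmod_def)
qed

lemma reachable_at_Lmod:
  assumes adm: "admissible E L" and ns: "distinct ns" "set ns \<subseteq> nbrs E u" and k: "k < length ns"
  shows "reachable_at (delv E u) (Lmod L ns k j) (ns ! k)"
proof (rule reachable_at_delv[OF adm])
  have "ns ! k \<in> nbrs E u" using ns(2) k nth_mem by blast
  then show "u \<in> nbrs E (ns ! k)" by (simp add: nbrs_commute)
  have "u \<in> nbrs E z" if "z \<in> set (take k ns)" for z
    using that ns(2) set_take_subset[of k ns] by (auto simp: nbrs_commute)
  then show "\<forall>z. Lmod L ns k j z = L z \<or> (u \<in> nbrs E z \<and> (\<exists>c. Lmod L ns k j z = L z - {c}))"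
    unfolding Lmod_def by auto
  show "Lmod L ns k j (ns ! k) = L (ns ! k)" using Lmod_nth[OF ns(1) k] .
qed

lemma nbrs_deg1:
  assumes "valid_order ord" "finite (nbrs E u)" "deg E u = 1"
  shows "nbrs E u = {hd (ord E u)}"
proof -
  have "distinct (ord E u)" "set (ord E u) = nbrs E u" using assms by (auto simp: valid_order_def)
  moreover from this have "length (ord E u) = 1"
    using assms(3) distinct_card[of "ord E u"] by (simp add: deg_def)
  ultimately show ?thesis by (cases "ord E u") auto
qed

lemma Pn_notin: "j \<notin> L u \<Longrightarrow> Pn n ord E L u j = 0"
  by (cases n) auto

lemma Pn_deg0: "deg E u = 0 \<Longrightarrow> j \<in> L u \<Longrightarrow> Pn n ord E L u j = 1 / real (card (L u))"
  by (cases n) auto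

lemma Pn_deg1_card4:
  "j \<in> L u \<Longrightarrow> deg E u = 1 \<Longrightarrow> card (L u) = 4 \<Longrightarrow>
    Pn (Suc n) ord E L u j = (1 - Pn n ord (delv E u) L (hd (ord E u)) j) / 3"
  by (simp add: Let_def)

lemma Pn_deg1_card3:
  "j \<in> L u \<Longrightarrow> deg E u = 1 \<Longrightarrow> card (L u) = 3 \<Longrightarrow> colors - L u = {c} \<Longrightarrow>
    Pn (Suc n) ord E L u j =
      (1 - Pn n ord (delv E u) L (hd (ord E u)) j) / (2 + Pn n ord (delv E u) L (hd (ord E u)) c)"
  by (simp add: Let_def)

declare Pn.simps [simp del]

definition deg2_v1 :: "('a set set \<Rightarrow> 'a \<Rightarrow> 'a list) \<Rightarrow> 'a set set \<Rightarrow> ('a \<Rightarrow> nat set) \<Rightarrow> nat \<Rightarrow> 'a \<Rightarrow> 'a"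
  where "deg2_v1 ord E L i u =
    (if ok_pair E L i (ord E u ! 0) (ord E u ! 1) then ord E u ! 0 else ord E u ! 1)"

definition deg2_v2 :: "('a set set \<Rightarrow> 'a \<Rightarrow> 'a list) \<Rightarrow> 'a set set \<Rightarrow> ('a \<Rightarrow> nat set) \<Rightarrow> nat \<Rightarrow> 'a \<Rightarrow> 'a"
  where "deg2_v2 ord E L i u =
    (if ok_pair E L i (ord E u ! 0) (ord E u ! 1) then ord E u ! 1 else ord E u ! 0)"

definition deg2_x :: "nat \<Rightarrow> ('a set set \<Rightarrow> 'a \<Rightarrow> 'a list) \<Rightarrow> 'a set set \<Rightarrow> ('a \<Rightarrow> nat set)
    \<Rightarrow> nat \<Rightarrow> 'a \<Rightarrow> nat \<Rightarrow> nat \<Rightarrow> real"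
  where "deg2_x n ord E L i u k w =
    (let v1 = deg2_v1 ord E L i u; us = ord (delv E u) v1
     in Pn n ord (delv (delv E u) v1) (Lmod L us k w) (us ! k) w)"

definition deg2_weight :: "nat \<Rightarrow> ('a set set \<Rightarrow> 'a \<Rightarrow> 'a list) \<Rightarrow> 'a set set \<Rightarrow> ('a \<Rightarrow> nat set)
    \<Rightarrow> nat \<Rightarrow> 'a \<Rightarrow> nat \<Rightarrow> real"
  where "deg2_weight n ord E L i u w =
    (\<Prod>k<length (ord (delv E u) (deg2_v1 ord E L i u)). 1 - deg2_x n ord E L i u k w)"

definition deg2_f :: "nat \<Rightarrow> ('a set set \<Rightarrow> 'a \<Rightarrow> 'a list) \<Rightarrow> 'a set set \<Rightarrow> ('a \<Rightarrow> nat set)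
    \<Rightarrow> nat \<Rightarrow> 'a \<Rightarrow> nat \<Rightarrow> real"
  where "deg2_f n ord E L i u j =
    (if j \<notin> L (deg2_v1 ord E L i u) then 0
     else deg2_weight n ord E L i u j / (\<Sum>w\<in>L (deg2_v1 ord E L i u). deg2_weight n ord E L i u w))"

definition deg2_y :: "nat \<Rightarrow> ('a set set \<Rightarrow> 'a \<Rightarrow> 'a list) \<Rightarrow> 'a set set \<Rightarrow> ('a \<Rightarrow> nat set)
    \<Rightarrow> nat \<Rightarrow> 'a \<Rightarrow> nat \<Rightarrow> real"
  where "deg2_y n ord E L i u j =
    (let v1 = deg2_v1 ord E L i u; v2 = deg2_v2 ord E L i u
     in Pn n ord (delv E u) (Lmod L [v1, v2] 1 j) v2 j)"

lemma Pn_deg2: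
  assumes "i \<in> L u" "deg E u = 2"
  shows "Pn (Suc n) ord E L u i = (1 - deg2_f n ord E L i u i) * (1 - deg2_y n ord E L i u i) /
     (\<Sum>j\<in>L u. (1 - deg2_f n ord E L i u j) * (1 - deg2_y n ord E L i u j))"
proof -
  have "(i \<notin> L u) = False" "(deg E u = 0) = False" "(deg E u = 1) = False" "(deg E u = 2) = True"
    using assms by simp_all
  then show ?thesis
    unfolding deg2_f_def deg2_weight_def deg2_x_def deg2_y_def deg2_v1_def deg2_v2_def Let_def
    by (simp only: Pn.simps(2) Let_def if_True if_False)
qed

lemma deg2_nbrs:
  assumes "valid_order ord" "finite (nbrs E u)" "deg E u = 2"
  shows "deg2_v1 ord E L i u \<noteq> deg2_v2 ord E L i u"
    "nbrs E u = {deg2_v1 ord E L i u, deg2_v2 ord E L i u}"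
    "deg E (deg2_v2 ord E L i u) \<le> deg E (deg2_v1 ord E L i u)"
proof -
  have di: "distinct (ord E u)" and st: "set (ord E u) = nbrs E u"
    using assms by (auto simp: valid_order_def)
  then have "length (ord E u) = 2" using assms(3) distinct_card[of "ord E u"] by (simp add: deg_def)
  then obtain a b where ab: "ord E u = [a, b]"
    by (metis (no_types) length_0_conv length_Suc_conv numeral_2_eq_2)
  have "deg E b \<le> deg E a" if "ok_pair E L i a b" using that by (simp add: ok_pair_def)
  moreover have "deg E a \<le> deg E b" if "\<not> ok_pair E L i a b" using that by (auto simp: ok_pair_def)
  ultimately show "deg2_v1 ord E L i u \<noteq> deg2_v2 ord E L i u"
    "nbrs E u = {deg2_v1 ord E L i u, deg2_v2 ord E L i u}"
    "deg E (deg2_v2 ord E L i u) \<le> deg E (deg2_v1 ord E L i u)"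
    using di st unfolding deg2_v1_def deg2_v2_def ab by (auto simp: insert_commute)
qed

lemma normalized_weight_bounds:
  fixes p f :: "nat \<Rightarrow> real"
  assumes A: "A \<subseteq> colors" "d + 2 \<le> card A" "d \<le> 2"
    and p: "\<And>w. (1/2)^d \<le> p w" "\<And>w. p w \<le> 1"
    and f: "\<And>j. f j = (if j \<notin> A then 0 else p j / sum p A)"
  shows "f j \<in> {0..4/7}" "sum f colors = 1" "j \<in> A \<Longrightarrow> 1/16 \<le> f j"
proof -
  have "d = 0 \<or> d = 1 \<or> d = 2" using A(3) by linarith
  then have d: "1/4 \<le> (1/2::real)^d" "3/4 \<le> real (d + 1) * (1/2)^d" by (auto simp: power2_eq_square)
  have fin: "finite A" using A(1) finite_colors finite_subset by blast
  have p4: "1/4 \<le> p w" for w using d(1) p(1) order_trans by blast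
  have "A \<noteq> {}" "0 < p w" for w using A(2) p4[of w] by auto
  then have sum_pos: "0 < sum p A" using sum_pos[OF fin] by blast
  have sum_le: "sum p A \<le> 4"
    using sum_bounded_above[of A p 1] p(2) card_le_4[OF A(1)] by (simp add: order_trans)
  have bounds: "f j \<in> {0..4/7} \<and> (j \<in> A \<longrightarrow> 1/16 \<le> f j)" for j
  proof (cases "j \<in> A")
    case False
    then show ?thesis using f by simp
  next
    case True
    have "real (d + 1) \<le> real (card (A - {j}))" using True fin A(2) by simp
    then have "real (d + 1) * (1/2)^d \<le> real (card (A - {j})) * (1/2)^d"
      by (simp add: mult_right_mono)
    also have "\<dots> \<le> sum p (A - {j})" using sum_bounded_below[of "A - {j}" "(1/2)^d" p] p(1) by simp
    finally have rest: "3/4 \<le> sum p (A - {j})" using d(2) by linarith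
    have "sum p A = p j + sum p (A - {j})" using True fin by (simp add: sum.remove)
    then have "p j / sum p A \<le> 4/7" "1/16 \<le> p j / sum p A"
      using sum_pos sum_le rest p(2)[of j] p4[of j] by (simp_all add: divide_le_eq le_divide_eq)
    moreover have "0 \<le> p j / sum p A" using sum_pos p4[of j] by simp
    ultimately show ?thesis using f True by simp
  qed
  then show "f j \<in> {0..4/7}" "j \<in> A \<Longrightarrow> 1/16 \<le> f j" by blast+
  have "sum f colors = sum f A"
    using A(1) finite_colors f by (intro sum.mono_neutral_right) auto
  also have "\<dots> = sum (\<lambda>j. p j / sum p A) A" using f by simp
  also have "\<dots> = 1" using sum_pos by (simp flip: sum_divide_distrib)
  finally show "sum f colors = 1" .
qed

lemma prod_one_minus_bounds:
  fixes x :: "nat \<Rightarrow> real"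
  assumes "\<And>k. k < d \<Longrightarrow> x k \<in> {0..1/2}"
  shows "(1/2)^d \<le> (\<Prod>k<d. 1 - x k)" "(\<Prod>k<d. 1 - x k) \<le> 1"
proof -
  have "(1/2::real)^d = (\<Prod>k<d. 1/2)" by simp
  also have "\<dots> \<le> (\<Prod>k<d. 1 - x k)" using assms by (intro prod_mono) auto
  finally show "(1/2)^d \<le> (\<Prod>k<d. 1 - x k)" .
  have "0 \<le> 1 - x k \<and> 1 - x k \<le> 1" if "k < d" for k using assms[OF that] by simp
  then show "(\<Prod>k<d. 1 - x k) \<le> 1" by (intro prod_le_1) auto
qed

definition small_values :: "nat set \<Rightarrow> (nat \<Rightarrow> real) \<Rightarrow> bool" where
  "small_values T y \<longleftrightarrow> (\<forall>k\<in>T. y k \<le> 6/13) \<or> (\<exists>c\<in>T. y c = 0)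
     \<or> (\<exists>k1\<in>T. \<exists>k2\<in>T. k1 \<noteq> k2 \<and> y k1 \<le> 5/12 \<and> y k2 \<le> 5/12)"

text \<open>Writing \<open>(1 - f\<^sub>j)(1 - y\<^sub>j) = (1 - f\<^sub>j)/2 + (1 - f\<^sub>j)(1/2 - y\<^sub>j)\<close>, the denominator exceeds the numerator
  by \<open>(2 + f\<^sub>i)/2\<close> plus the nonnegative slack of the colours \<open>j \<noteq> i\<close>.\<close>

locale case_c_values =
  fixes f y :: "nat \<Rightarrow> real" and i :: nat
  assumes i: "i \<in> colors"
    and f: "\<And>j. f j \<in> {0..4/7}" and sum_f: "sum f colors = 1"
    and y: "\<And>j. y j \<in> {0..1/2}"
begin

definition slack :: real where
  "slack = (\<Sum>j\<in>colors - {i}. (1 - f j) * (1/2 - y j))"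

lemma sum_one_minus_f_others: "(\<Sum>j\<in>colors - {i}. 1 - f j) = 2 + f i"
proof -
  have "sum f (colors - {i}) = 1 - f i" using sum_f i finite_colors by (simp add: sum_diff1)
  then show ?thesis using card_colors_remove[OF i] by (simp add: sum_subtractf)
qed

lemma denominator_eq:
  "(\<Sum>j\<in>colors. (1 - f j) * (1 - y j)) = (1 - f i) * (1 - y i) + (2 + f i) / 2 + slack"
proof -
  have "(\<Sum>j\<in>colors - {i}. (1 - f j) * (1 - y j))
      = (\<Sum>j\<in>colors - {i}. (1 - f j) / 2) + slack"
    unfolding slack_def by (simp add: algebra_simps flip: sum.distrib)
  also have "\<dots> = (2 + f i) / 2 + slack"
    using sum_one_minus_f_others by (simp flip: sum_divide_distrib)
  finally show ?thesis using i finite_colors by (simp add: sum.remove)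
qed

lemma slack_term_bounds: "(1 - f j) * (1/2 - y j) \<in> {0..(1 - f j) / 2}"
  using f[of j] y[of j] by (auto simp: mult_left_le)

lemma slack_bounds: "0 \<le> slack" "slack \<le> (2 + f i) / 2"
proof -
  have "0 \<le> slack \<and> slack \<le> (\<Sum>j\<in>colors - {i}. (1 - f j) / 2)"
    unfolding slack_def using slack_term_bounds
    by (intro conjI sum_nonneg sum_mono) simp_all
  then show "0 \<le> slack" "slack \<le> (2 + f i) / 2"
    using sum_one_minus_f_others by (simp_all flip: sum_divide_distrib)
qed

lemma ratio_bounds:
  "(1 - f i) * (1 - y i) / (\<Sum>j\<in>colors. (1 - f j) * (1 - y j)) \<in> {1/15..1/2}"
proof -
  have "3/7 \<le> 1 - f i" "1/2 \<le> 1 - y i" "1 - f i \<le> 1" "1 - y i \<le> 1" using f[of i] y[of i] by auto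
  then have "3/14 \<le> (1 - f i) * (1 - y i)" "(1 - f i) * (1 - y i) \<le> 1"
    using mult_mono[of "3/7" "1 - f i" "1/2" "1 - y i"] by (auto simp: mult_le_one)
  then show ?thesis
    unfolding denominator_eq using slack_bounds f[of i] by (auto simp: field_simps)
qed

lemma ratio_le_13_27:
  assumes "1/13 \<le> slack \<or> 1/16 \<le> f i"
  shows "(1 - f i) * (1 - y i) / (\<Sum>j\<in>colors. (1 - f j) * (1 - y j)) \<le> 13/27"
proof -
  have "(1 - f i) * (1 - y i) \<le> 1 - f i" "0 \<le> (1 - f i) * (1 - y i)"
    using f[of i] y[of i] by (auto simp: mult_left_le)
  then show ?thesis
    unfolding denominator_eq using assms slack_bounds f[of i] by (auto simp: field_simps)
qed

lemma slack_ge_if_small_values: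
  assumes "small_values (colors - {i}) y"
  shows "1/13 \<le> slack"
  using assms unfolding small_values_def
proof (elim disjE bexE conjE)
  assume small: "\<forall>k\<in>colors - {i}. y k \<le> 6/13"
  have "(1 - f k) / 26 \<le> (1 - f k) * (1/2 - y k)" if "k \<in> colors - {i}" for k
    using small[rule_format, OF that] f[of k] mult_left_mono[of "1/26" "1/2 - y k" "1 - f k"] by auto
  then have "(\<Sum>k\<in>colors - {i}. (1 - f k) / 26) \<le> slack"
    unfolding slack_def by (rule sum_mono)
  then show ?thesis using sum_one_minus_f_others f[of i] by (simp flip: sum_divide_distrib)
next
  fix c assume c: "c \<in> colors - {i}" "y c = 0"
  have "(1 - f c) * (1/2 - y c) \<le> slack"
    unfolding slack_def using c finite_colors slack_term_bounds by (intro member_le_sum) auto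
  then show ?thesis using c f[of c] by simp
next
  fix k1 k2 assume k: "k1 \<in> colors - {i}" "k2 \<in> colors - {i}" "k1 \<noteq> k2"
    "y k1 \<le> 5/12" "y k2 \<le> 5/12"
  have term_ge: "(1 - f k) / 12 \<le> (1 - f k) * (1/2 - y k)" if "y k \<le> 5/12" for k
    using that f[of k] mult_left_mono[of "1/12" "1/2 - y k" "1 - f k"] by auto
  have "sum f {k1, k2} \<le> sum f colors"
    using k f finite_colors by (intro sum_mono2) auto
  moreover have "(\<Sum>k\<in>{k1, k2}. (1 - f k) * (1/2 - y k)) \<le> slack"
    unfolding slack_def using k finite_colors slack_term_bounds by (intro sum_mono2) auto
  ultimately show ?thesis using k term_ge[of k1] term_ge[of k2] sum_f by (simp add: slack_def)
qed

end

context
  fixes ord :: "'a set set \<Rightarrow> 'a \<Rightarrow> 'a list" and n :: nat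
  assumes vo: "valid_order ord"
    and IH: "\<And>E L u j. reachable_at E L u \<Longrightarrow> Pn n ord E L u j \<in> {0..1/2}"
begin

lemma deg2_f_bounds:
  assumes r: "reachable_at E L u" and d: "deg E u = 2"
  shows "deg2_f n ord E L i u j \<in> {0..4/7}" "sum (deg2_f n ord E L i u) colors = 1"
    "j \<in> L (deg2_v1 ord E L i u) \<Longrightarrow> 1/16 \<le> deg2_f n ord E L i u j"
proof -
  define v1 where "v1 = deg2_v1 ord E L i u"
  define us where "us = ord (delv E u) v1"
  have adm: "admissible E L" using reachable_atD(1)[OF r] .
  have "v1 \<in> nbrs E u" using deg2_nbrs(2)[OF vo admissibleD(1)[OF adm] d] v1_def by blast
  then have u: "u \<in> nbrs E v1" by (simp add: nbrs_commute)
  have adm': "admissible (delv E u) L" using admissible_delv[OF adm, of L] by simp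
  have us: "distinct us" "set us = nbrs (delv E u) v1"
    using vo admissibleD(1)[OF adm'] by (auto simp: us_def valid_order_def)
  have x: "deg2_x n ord E L i u k w \<in> {0..1/2}" if "k < length us" for k w
  proof -
    have "reachable_at (delv (delv E u) v1) (Lmod L us k w) (us ! k)"
      using reachable_at_Lmod[OF adm' us(1) _ that] us(2) by simp
    then show ?thesis using IH unfolding deg2_x_def Let_def us_def v1_def by blast
  qed
  have deg_v1: "deg (delv E u) v1 = deg E v1 - 1" "1 \<le> deg E v1"
    using deg_delv_nbr[OF admissibleD(1)[OF adm] u] by auto
  have "length us = deg (delv E u) v1"
    using us distinct_card[of us] by (simp add: deg_def)
  then have weight: "(1/2)^deg (delv E u) v1 \<le> deg2_weight n ord E L i u w"
    "deg2_weight n ord E L i u w \<le> 1" for w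
    using prod_one_minus_bounds[of "length us" "\<lambda>k. deg2_x n ord E L i u k w"] x
    by (simp_all add: deg2_weight_def us_def v1_def)
  have "L v1 \<subseteq> colors" "deg E v1 + 1 \<le> card (L v1)" "deg E v1 \<le> 3"
    using admissibleD[OF adm] u by blast+
  then have A: "L v1 \<subseteq> colors" "deg (delv E u) v1 + 2 \<le> card (L v1)" "deg (delv E u) v1 \<le> 2"
    using deg_v1 by linarith+
  have f: "deg2_f n ord E L i u j = (if j \<notin> L v1 then 0
      else deg2_weight n ord E L i u j / sum (deg2_weight n ord E L i u) (L v1))" for j
    by (simp add: deg2_f_def v1_def)
  note bounds = normalized_weight_bounds[OF A weight f]
  show "deg2_f n ord E L i u j \<in> {0..4/7}" "sum (deg2_f n ord E L i u) colors = 1"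
    "j \<in> L (deg2_v1 ord E L i u) \<Longrightarrow> 1/16 \<le> deg2_f n ord E L i u j"
    using bounds unfolding v1_def by blast+
qed

lemma deg2_y_bounds:
  assumes r: "reachable_at E L u" and d: "deg E u = 2"
  shows "deg2_y n ord E L i u j \<in> {0..1/2}"
proof -
  define v1 where "v1 = deg2_v1 ord E L i u"
  define v2 where "v2 = deg2_v2 ord E L i u"
  have adm: "admissible E L" using reachable_atD(1)[OF r] .
  have "v1 \<noteq> v2" "nbrs E u = {v1, v2}"
    using deg2_nbrs(1,2)[OF vo admissibleD(1)[OF adm] d] unfolding v1_def v2_def by blast+
  then have "reachable_at (delv E u) (Lmod L [v1, v2] 1 j) v2"
    using reachable_at_Lmod[OF adm, of "[v1, v2]" u 1 j] by simp
  then show ?thesis using IH unfolding deg2_y_def Let_def v1_def v2_def by blast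
qed

lemma Pn_deg1_bounds:
  assumes r: "reachable_at E L u" and d: "deg E u = 1" and j: "j \<in> L u"
  shows "Pn (Suc n) ord E L u j \<in> {1/6..1/2}"
proof -
  define w where "w = hd (ord E u)"
  have adm: "admissible E L" using reachable_atD(1)[OF r] .
  have "nbrs E u = {w}" using nbrs_deg1[OF vo admissibleD(1)[OF adm] d] w_def by simp
  then have "reachable_at (delv E u) L w" using reachable_at_Lmod[OF adm, of "[w]" u 0] by simp
  then have x: "Pn n ord (delv E u) L w c \<in> {0..1/2}" for c using IH by blast
  have "3 \<le> card (L u)" "card (L u) \<le> 4" using reachable_atD[OF r] d by auto
  then consider "card (L u) = 4" | "card (L u) = 3" by linarith
  then show ?thesis
  proof cases
    case 1
    then show ?thesis using Pn_deg1_card4[where n = n and ord = ord and L = L, OF j d] x[of j] w_def by simp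
  next
    case 2
    have "card (colors - L u) = 1"
      using 2 card_Diff_subset[OF _ reachable_atD(3)[OF r]] card_colors card.infinite by fastforce
    then obtain c where c: "colors - L u = {c}" by (rule card_1_singletonE)
    have "(1 - Pn n ord (delv E u) L w j) / (2 + Pn n ord (delv E u) L w c) \<in> {1/6..1/2}"
      using x[of j] x[of c] by (simp add: divide_le_eq le_divide_eq)
    then show ?thesis using Pn_deg1_card3[where n = n and ord = ord and L = L, OF j d 2 c] w_def by simp
  qed
qed

lemma Pn_deg2_bounds:
  assumes r: "reachable_at E L u" and d: "deg E u = 2" and j: "j \<in> L u"
  shows "Pn (Suc n) ord E L u j \<in> {1/15..1/2}"
proof -
  have "L u = colors" using reachable_atD[OF r] d eq_colors_if_card by simp
  moreover have "case_c_values (deg2_f n ord E L j u) (deg2_y n ord E L j u) j"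
    using j calculation deg2_f_bounds[OF r d] deg2_y_bounds[OF r d]
    by unfold_locales simp_all
  ultimately show ?thesis
    using Pn_deg2[where n = n and L = L and u = u and ord = ord, OF j d] case_c_values.ratio_bounds
    by metis
qed

end

lemma inv_card_bounds:
  assumes "reachable_at E L u"
  shows "1 / real (card (L u)) \<in> {1/4..1/2}"
  using reachable_atD(5,6)[OF assms] by (simp add: field_simps)

lemma Pn_half_bounded:
  assumes vo: "valid_order ord" and r: "reachable_at E L u"
  shows "Pn n ord E L u j \<in> {0..1/2}"
  using r
proof (induction n arbitrary: E L u j)
  case 0
  then show ?case using inv_card_bounds[OF 0] by (simp add: Pn.simps(1))
next
  case (Suc n)
  note IH = Suc.IH
  show ?case
  proof (cases "j \<in> L u")
    case False
    then show ?thesis by (simp add: Pn_notin)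
  next
    case j: True
    have "deg E u \<le> 2" using reachable_atD(2)[OF Suc.prems] .
    then consider "deg E u = 0" | "deg E u = 1" | "deg E u = 2" by linarith
    then show ?thesis
    proof cases
      case 1
      then show ?thesis using Pn_deg0[where L = L, OF 1 j] inv_card_bounds[OF Suc.prems] by simp
    next
      case 2
      then show ?thesis using Pn_deg1_bounds[OF vo IH Suc.prems 2 j] by simp
    next
      case 3
      then show ?thesis using Pn_deg2_bounds[OF vo IH Suc.prems 3 j] by simp
    qed
  qed
qed

definition prob_floor :: "nat \<Rightarrow> real" where
  "prob_floor d = (if d \<le> 1 then 1/6 else 1/15)"

lemma Pn_ge_prob_floor:
  assumes vo: "valid_order ord" and r: "reachable_at E L u" and j: "j \<in> L u"
  shows "prob_floor (deg E u) \<le> Pn n ord E L u j"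
proof (cases n)
  case 0
  then show ?thesis using inv_card_bounds[OF r] j by (auto simp: Pn.simps(1) prob_floor_def)
next
  case (Suc m)
  note IH = Pn_half_bounded[OF vo]
  have "deg E u \<le> 2" using reachable_atD(2)[OF r] .
  then consider "deg E u = 0" | "deg E u = 1" | "deg E u = 2" by linarith
  then show ?thesis
  proof cases
    case 1
    then show ?thesis using Pn_deg0[where L = L, OF 1 j] inv_card_bounds[OF r] by (simp add: prob_floor_def)
  next
    case 2
    then show ?thesis using Pn_deg1_bounds[OF vo IH r 2 j] Suc by (simp add: prob_floor_def)
  next
    case 3
    then show ?thesis using Pn_deg2_bounds[OF vo IH r 3 j] Suc by (simp add: prob_floor_def)
  qed
qed

lemma small_values_uniform:
  assumes i: "i \<in> colors" and A: "A \<subseteq> colors" "2 \<le> card A"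
    and y: "\<And>j. y j = (if j \<in> A then 1 / real (card A) else 0)"
  shows "small_values (colors - {i}) y"
proof (cases "3 \<le> card A")
  case True
  then have "y k \<le> 6/13" for k using y[of k] by (simp add: field_simps)
  then show ?thesis unfolding small_values_def by blast
next
  case False
  have "finite A" using A(1) finite_colors finite_subset by blast
  then have "\<not> colors - {i} \<subseteq> A"
    using card_mono[of A "colors - {i}"] card_colors_remove[OF i] False by linarith
  then obtain c where "c \<in> colors - {i}" "c \<notin> A" by blast
  then show ?thesis using y[of c] unfolding small_values_def by auto
qed

text \<open>In the next two lemmas \<open>v\<^sub>2\<close> has a single neighbour \<open>w \<noteq> v\<^sub>1\<close> in \<open>G\<^sub>v\<close>, \<open>x j k\<close> is the value
  at colour \<open>k\<close> of the call at \<open>w\<close> made inside the computation of \<open>y\<^sub>j\<close>, and \<open>A\<close>, \<open>B\<close> are the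
  lists of \<open>v\<^sub>2\<close> and \<open>w\<close>.\<close>

lemma small_values_missing_colour:
  fixes x :: "nat \<Rightarrow> nat \<Rightarrow> real" and y :: "nat \<Rightarrow> real"
  assumes i: "i \<in> colors"
    and B: "B \<subseteq> colors" "e + 2 \<le> card B" "e \<le> 2"
    and x: "\<And>j k. x j k \<in> {0..1/2}" "\<And>j k. k \<in> B \<Longrightarrow> prob_floor e \<le> x j k"
      "\<And>j k. k \<notin> B \<Longrightarrow> x j k = 0"
    and y: "\<And>j. j \<in> colors - {i} \<Longrightarrow> y j = (1 - x j j) / (2 + x j i)"
  shows "small_values (colors - {i}) y"
proof (cases "i \<in> B")
  case True
  have "y k \<le> 6/13" if k: "k \<in> colors - {i}" for k
  proof (cases "e \<le> 1")
    case e: True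
    then have "1/6 \<le> x k i" using x(2)[OF True, of k] by (simp add: prob_floor_def)
    then have "(1 - x k k) / (2 + x k i) \<le> 1 / (13/6)"
      using x(1)[of k k] by (intro frac_le) auto
    then show ?thesis using y[OF k] by simp
  next
    case False
    then have "B = colors" using B eq_colors_if_card by simp
    then have "1/15 \<le> x k k" "1/15 \<le> x k i"
      using x(2) False k True by (auto simp: prob_floor_def)
    then have "(1 - x k k) / (2 + x k i) \<le> (14/15) / (31/15)" by (intro frac_le) auto
    also have "\<dots> \<le> 6/13" by simp
    finally show ?thesis using y[OF k] by simp
  qed
  then show ?thesis unfolding small_values_def by blast
next
  case False
  then have B_sub: "B \<subseteq> colors - {i}" using B(1) by blast
  then have "card B \<le> 3" using card_mono[of "colors - {i}" B] card_colors_remove[OF i] finite_colors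
    by simp
  then have e: "e \<le> 1" using B(2) by linarith
  have "y k \<le> 5/12" if "k \<in> B" for k
  proof -
    have "1/6 \<le> x k k" using x(2)[OF that] e by (simp add: prob_floor_def)
    moreover have "x k i = 0" using x(3) False by blast
    moreover have "y k = (1 - x k k) / (2 + x k i)" using y that B_sub by blast
    ultimately show ?thesis by simp
  qed
  moreover have "\<not> card B \<le> Suc 0" using B(2) by linarith
  then obtain k1 k2 where "k1 \<in> B" "k2 \<in> B" "k1 \<noteq> k2"
    using card_le_Suc0_iff_eq[OF finite_subset[OF B(1) finite_colors]] by blast
  ultimately show ?thesis using B_sub unfolding small_values_def by blast
qed

lemma small_values_deg1:
  fixes x :: "nat \<Rightarrow> nat \<Rightarrow> real" and y :: "nat \<Rightarrow> real"
  assumes i: "i \<in> colors"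
    and A: "A \<subseteq> colors" "3 \<le> card A"
    and B: "B \<subseteq> colors" "e + 2 \<le> card B" "e \<le> 2"
    and x: "\<And>j k. x j k \<in> {0..1/2}" "\<And>j k. k \<in> B \<Longrightarrow> prob_floor e \<le> x j k"
      "\<And>j k. k \<notin> B \<Longrightarrow> x j k = 0"
    and y_out: "\<And>j. j \<notin> A \<Longrightarrow> y j = 0"
    and y4: "\<And>j. card A = 4 \<Longrightarrow> j \<in> A \<Longrightarrow> y j = (1 - x j j) / 3"
    and y3: "\<And>j c. card A = 3 \<Longrightarrow> colors - A = {c} \<Longrightarrow> j \<in> A \<Longrightarrow>
      y j = (1 - x j j) / (2 + x j c)"
  shows "small_values (colors - {i}) y"
proof (cases "card A = 4")
  case True
  then have "y k \<le> 6/13" for k using x(1)[of k k] y4[of k] y_out[of k] by (cases "k \<in> A") auto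
  then show ?thesis unfolding small_values_def by blast
next
  case False
  have fin: "finite A" using A(1) finite_colors finite_subset by blast
  have card_A: "card A = 3" using A card_le_4[OF A(1)] False by linarith
  then have "card (colors - A) = 1" using card_Diff_subset[OF fin A(1)] card_colors by simp
  then obtain c where c: "colors - A = {c}" by (rule card_1_singletonE)
  show ?thesis
  proof (cases "c = i")
    case False
    then show ?thesis using c y_out[of c] unfolding small_values_def by blast
  next
    case True
    then have "colors - {i} = A" using c A(1) by blast
    then show ?thesis using small_values_missing_colour[OF i B x] y3[OF card_A c] True by simp
  qed
qed

text \<open>In the next two lemmas \<open>M j\<close> stands for the list assignment \<open>L\<^sub>2\<^sub>,\<^sub>j\<close> with which \<open>y\<^sub>j\<close> is
  computed; it depends on \<open>j\<close> only away from \<open>u\<close> and its neighbours.\<close>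

lemma small_values_Pn_deg0:
  assumes i: "i \<in> colors" and r: "\<And>j. reachable_at E (M j) u" and d: "deg E u = 0"
    and same: "\<And>j. M j u = A"
  shows "small_values (colors - {i}) (\<lambda>j. Pn n ord E (M j) u j)"
proof (rule small_values_uniform[OF i])
  show "A \<subseteq> colors" "2 \<le> card A" using reachable_atD(3,5)[OF r] same by metis+
  show "Pn n ord E (M j) u j = (if j \<in> A then 1 / real (card A) else 0)" for j
    using Pn_deg0[where L = "M j", OF d] Pn_notin[where L = "M j"] same by simp
qed

lemma small_values_Pn_deg1:
  assumes vo: "valid_order ord" and i: "i \<in> colors"
    and r: "\<And>j. reachable_at E (M j) u" and d: "deg E u = 1"
    and same_u: "\<And>j. M j u = A" and same_w: "\<And>j. M j (hd (ord E u)) = B"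
  shows "small_values (colors - {i}) (\<lambda>j. Pn (Suc n) ord E (M j) u j)"
proof -
  define w where "w = hd (ord E u)"
  define e where "e = deg (delv E u) w"
  have adm: "admissible E (M j)" for j using reachable_atD(1)[OF r] .
  have "nbrs E u = {w}" using nbrs_deg1[OF vo admissibleD(1)[OF adm] d] w_def by simp
  then have rw: "reachable_at (delv E u) (M j) w" for j
    using reachable_at_Lmod[OF adm, of "[w]" u 0] by simp
  have B: "B \<subseteq> colors" "e + 2 \<le> card B" "e \<le> 2"
    using reachable_atD(2-4)[OF rw] same_w e_def w_def by metis+
  show ?thesis
  proof (rule small_values_deg1[where x = "\<lambda>j k. Pn n ord (delv E u) (M j) w k"
        and y = "\<lambda>j. Pn (Suc n) ord E (M j) u j", OF i _ _ B])
    show "A \<subseteq> colors" "3 \<le> card A" using reachable_atD(3,4)[OF r] d same_u by (metis, fastforce)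
    show "Pn n ord (delv E u) (M j) w k \<in> {0..1/2}" for j k using Pn_half_bounded[OF vo rw] .
    show "prob_floor e \<le> Pn n ord (delv E u) (M j) w k" if "k \<in> B" for j k
      using Pn_ge_prob_floor[OF vo rw] that same_w e_def w_def by metis
    show "Pn n ord (delv E u) (M j) w k = 0" if "k \<notin> B" for j k
      using Pn_notin that same_w w_def by metis
    show "Pn (Suc n) ord E (M j) u j = 0" if "j \<notin> A" for j
      using Pn_notin that same_u by metis
    show "Pn (Suc n) ord E (M j) u j = (1 - Pn n ord (delv E u) (M j) w j) / 3"
      if "card A = 4" "j \<in> A" for j
      using Pn_deg1_card4[where n = n and ord = ord and L = "M j"] that same_u d w_def by simp
    show "Pn (Suc n) ord E (M j) u j =
        (1 - Pn n ord (delv E u) (M j) w j) / (2 + Pn n ord (delv E u) (M j) w c)"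
      if "card A = 3" "colors - A = {c}" "j \<in> A" for j c
      using Pn_deg1_card3[where n = n and ord = ord and L = "M j"] that same_u d w_def by simp
  qed
qed

lemma deg2_small_values_or_f_large:
  assumes vo: "valid_order ord" and r: "reachable_at E L v" and d: "deg E v = 2" and i: "i \<in> colors"
    and no_edge: "{deg2_v1 ord E L i v, deg2_v2 ord E L i v} \<notin> E"
  shows "small_values (colors - {i}) (deg2_y (Suc n) ord E L i v) \<or> 1/16 \<le> deg2_f (Suc n) ord E L i v i"
proof -
  define v1 where "v1 = deg2_v1 ord E L i v"
  define v2 where "v2 = deg2_v2 ord E L i v"
  define M where "M j = Lmod L [v1, v2] 1 j" for j
  have adm: "admissible E L" using reachable_atD(1)[OF r] .
  have V: "v1 \<noteq> v2" "nbrs E v = {v1, v2}" "deg E v2 \<le> deg E v1"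
    using deg2_nbrs[OF vo admissibleD(1)[OF adm] d] unfolding v1_def v2_def by blast+
  then have rM: "reachable_at (delv E v) (M j) v2" for j
    using reachable_at_Lmod[OF adm, of "[v1, v2]" v 1 j] by (simp add: M_def)
  have M_eq: "M j z = (if z = v1 then L z - {j} else L z)" for j z
    by (simp add: M_def Lmod_def)
  have y_eq: "deg2_y (Suc n) ord E L i v = (\<lambda>j. Pn (Suc n) ord (delv E v) (M j) v2 j)"
    by (simp add: fun_eq_iff deg2_y_def Let_def M_def v1_def v2_def)
  have "deg (delv E v) v2 \<le> 2" using reachable_atD(2)[OF rM] .
  then consider "deg (delv E v) v2 = 0" | "deg (delv E v) v2 = 1" | "deg (delv E v) v2 = 2"
    by linarith
  then show ?thesis
  proof cases
    case 1
    then show ?thesis using small_values_Pn_deg0[where A = "L v2", OF i rM 1] M_eq V(1) y_eq by simp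
  next
    case 2
    define w where "w = hd (ord (delv E v) v2)"
    have "w \<in> nbrs (delv E v) v2"
      using nbrs_deg1[OF vo admissibleD(1)[OF reachable_atD(1)[OF rM]] 2] w_def by simp
    then have "w \<in> nbrs E v2" using nbrs_delv_subset[of E v v2] by blast
    then have "w \<noteq> v1" using no_edge unfolding v1_def v2_def nbrs_def by blast
    then show ?thesis
      using small_values_Pn_deg1[where A = "L v2" and B = "L w", OF vo i rM 2] M_eq V(1) y_eq w_def by simp
  next
    case 3
    have "v \<in> nbrs E v2" "v \<in> nbrs E v1" using V(2) by (auto simp: nbrs_commute)
    have "deg E v2 = 3" using 3 deg_delv_nbr[OF admissibleD(1)[OF adm] \<open>v \<in> nbrs E v2\<close>] by simp
    then have "deg E v1 = 3" using V(3) admissibleD(2)[OF adm, of v1] by linarith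
    moreover have "L v1 \<subseteq> colors" "deg E v1 + 1 \<le> card (L v1)"
      using admissibleD(3,4)[OF adm \<open>v \<in> nbrs E v1\<close>] .
    ultimately have "i \<in> L v1" using eq_colors_if_card[of "L v1"] i by simp
    then show ?thesis using deg2_f_bounds(3)[OF vo Pn_half_bounded[OF vo] r d] v1_def by blast
  qed
qed

lemma Pn_deg2_le_13_27:
  assumes vo: "valid_order ord" and r: "reachable_at E L v" and d: "deg E v = 2" and i: "i \<in> colors"
    and no_edge: "{deg2_v1 ord E L i v, deg2_v2 ord E L i v} \<notin> E"
  shows "Pn (Suc (Suc n)) ord E L v i \<le> 13/27"
proof -
  have Lv: "L v = colors" using reachable_atD[OF r] d eq_colors_if_card by simp
  interpret case_c_values "deg2_f (Suc n) ord E L i v" "deg2_y (Suc n) ord E L i v" i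
    using i deg2_f_bounds[OF vo Pn_half_bounded[OF vo] r d] deg2_y_bounds[OF vo Pn_half_bounded[OF vo] r d]
    by unfold_locales simp_all
  have "1/13 \<le> slack \<or> 1/16 \<le> deg2_f (Suc n) ord E L i v i"
    using deg2_small_values_or_f_large[OF vo r d i no_edge] slack_ge_if_small_values by blast
  then show ?thesis
    using ratio_le_13_27 Pn_deg2[where L = L and u = v and n = "Suc n" and ord = ord] i d Lv by simp
qed

lemma reachable_imp_reachable_at:
  assumes "reachable V E L v"
  shows "reachable_at E L v"
proof -
  have wf: "wf_graph V E" and V: "\<And>u. u \<in> V \<Longrightarrow> L u \<subseteq> colors \<and> deg E u \<le> 3 \<and> deg E u + 1 \<le> card (L u)"
    and v: "v \<in> V" "deg E v \<le> 2" "deg E v + 2 \<le> card (L v)"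
    using assms unfolding reachable_def by auto
  have edge: "y \<in> V \<and> z \<in> V" if "y \<in> nbrs E z" for y z
    using that wf unfolding wf_graph_def nbrs_def by auto
  have fin: "finite (nbrs E z)" for z
    using edge wf finite_subset[of "nbrs E z" V] unfolding wf_graph_def by blast
  have in_V: "z \<in> V" if "nbrs E z \<noteq> {}" for z
    using that edge by blast
  have "admissible E L" unfolding admissible_def
  proof
    fix z
    show "finite (nbrs E z) \<and> deg E z \<le> 3 \<and>
        (nbrs E z \<noteq> {} \<longrightarrow> L z \<subseteq> colors \<and> deg E z + 1 \<le> card (L z))"
      using fin[of z] in_V[of z] V[of z] by (cases "nbrs E z = {}") (auto simp: deg_def)
  qed
  then show ?thesis unfolding reachable_at_def using V v by blast
qed

theorem proposition10:
  fixes V :: "'a set" and E :: "'a set set" and L :: "'a \<Rightarrow> nat set"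
    and v :: 'a and i :: nat and ord :: "'a set set \<Rightarrow> 'a \<Rightarrow> 'a list"
  assumes "valid_order ord"
    and "reachable V E L v"
    and "deg E v = 2"
    and "i \<in> colors"
  shows "triangle_at E v \<or> (\<forall>D::int. D \<ge> 2 \<longrightarrow> P ord E L v i D \<le> 13 / 27)"
proof (cases "triangle_at E v")
  case False
  then obtain a b where ab: "a \<in> nbrs E v" "b \<in> nbrs E v" "a \<noteq> b" "{a, b} \<notin> E"
    unfolding triangle_at_def by blast
  have r: "reachable_at E L v" using reachable_imp_reachable_at[OF assms(2)] .
  have "nbrs E v = {deg2_v1 ord E L i v, deg2_v2 ord E L i v}"
    using deg2_nbrs(2)[OF assms(1) admissibleD(1)[OF reachable_atD(1)[OF r]] assms(3)] .
  then have no_edge: "{deg2_v1 ord E L i v, deg2_v2 ord E L i v} \<notin> E"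
    using ab by (auto simp: insert_commute)
  have "\<forall>D::int. D \<ge> 2 \<longrightarrow> P ord E L v i D \<le> 13 / 27"
  proof (intro allI impI)
    fix D :: int
    assume "2 \<le> D"
    then have "nat D = Suc (Suc (nat D - 2))" by arith
    then show "P ord E L v i D \<le> 13 / 27"
      using Pn_deg2_le_13_27[OF assms(1) r assms(3,4) no_edge] unfolding P_def by metis
  qed
  then show ?thesis ..
qed simp

end
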